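(* Let $\mathcal{A}\in\mathbb{R}^{n\times n\times n}$ and $\mathcal{E}\in\mathbb{R}^{n\times n\times n}$ be such that $\mathcal{A}$ and $\tilde{\mathcal{A}}=\mathcal{A}+\mathcal{E}$ are piezoelectric-type tensors. Then $$\Big[\sqrt{(\lambda_{C\max}(\mathcal{A}))^2+\lambda_{Z\min}(\mathcal{S}_{\tilde{\mathcal{A}}}-\mathcal{S}_{\mathcal{A}})},\ \sqrt{(\lambda_{C\max}(\mathcal{A}))^2+\lambda_{Z\max}(\mathcal{S}_{\tilde{\mathcal{A}}}-\mathcal{S}_{\mathcal{A}})}\Big]\subseteq\big[\lambda_{C\max}(\mathcal{A})-\lambda_{C\max}(\mathcal{E}),\ \lambda_{C\max}(\mathcal{A})+\lambda_{C\max}(\mathcal{E})\big].$$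
   Context: A tensor $\mathcal{A}=(a_{ijk})\in\mathbb{R}^{n\times n\times n}$ is piezoelectric-type if $a_{ijk}=a_{ikj}$ for all $i,j,k$ (so $\mathcal{E}$ is piezoelectric-type too). For such $\mathcal{A}$, $\lambda_{C\max}(\mathcal{A})=\max\{\sum_{i,j,k}a_{ijk}x_iy_jy_k:\ \mathbf{x},\mathbf{y}\in\mathbb{R}^n,\ \mathbf{x}^T\mathbf{x}=\mathbf{y}^T\mathbf{y}=1\}$ is its largest $C$-eigenvalue (a $C$-eigenvalue being a real $\lambda$ with unit $\mathbf{x},\mathbf{y}$ satisfying $\sum_{j,k}a_{ijk}y_jy_k=\lambda x_i$ and $\sum_{j,k}a_{jki}x_jy_k=\lambda y_i$ for all $i$). The symmetric fourth-order tensor $\mathcal{S}_{\mathcal{A}}=(\bar b_{i_1i_2i_3i_4})$ is defined by $\bar b_{i_1i_2i_3i_4}=\frac13(b_{i_1i_2i_3i_4}+b_{i_1i_3i_2i_4}+b_{i_1i_4i_2i_3})$, where $b_{i_1i_2i_3i_4}=\sum_{i=1}^n a_{ii_1i_2}a_{ii_3i_4}$. For a symmetric fourth-order tensor $\mathcal{T}=(t_{i_1i_2i_3i_4})$, a $Z$-eigenvalue is a real $\lambda$ with some $\mathbf{x}\in\mathbb{R}^n$, $\mathbf{x}^T\mathbf{x}=1$, such that $\sum_{i_2,i_3,i_4}t_{ii_2i_3i_4}x_{i_2}x_{i_3}x_{i_4}=\lambda x_i$ for all $i$; $\lambda_{Z\max}(\mathcal{T})$ and $\lambda_{Z\min}(\mathcal{T})$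 denote the largest and smallest $Z$-eigenvalues, which equal respectively the maximum and minimum of $\mathcal{T}\mathbf{x}^4=\sum t_{i_1i_2i_3i_4}x_{i_1}x_{i_2}x_{i_3}x_{i_4}$ over unit vectors $\mathbf{x}\in\mathbb{R}^n$. *)

theory Defs
  imports Complex_Main
begin

text \<open>Third-order tensors in R^{n x n x n} are functions 'n => 'n => 'n => real over a
finite index type 'n (n = CARD('n)); fourth-order tensors analogously.
Vectors in R^n are functions 'n => real.\<close>

type_synonym ('n) tensor3 = "'n \<Rightarrow> 'n \<Rightarrow> 'n \<Rightarrow> real"
type_synonym ('n) tensor4 = "'n \<Rightarrow> 'n \<Rightarrow> 'n \<Rightarrow> 'n \<Rightarrow> real"

definition unit_vec :: "('n::finite \<Rightarrow> real) \<Rightarrow> bool" where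
  "unit_vec x \<longleftrightarrow> (\<Sum>i\<in>UNIV. x i * x i) = 1"

definition piezo_type :: "('n::finite) tensor3 \<Rightarrow> bool" where
  "piezo_type A \<longleftrightarrow> (\<forall>i j k. A i j k = A i k j)"

definition tadd3 :: "('n::finite) tensor3 \<Rightarrow> 'n tensor3 \<Rightarrow> 'n tensor3" where
  "tadd3 A E = (\<lambda>i j k. A i j k + E i j k)"

definition tsub4 :: "('n::finite) tensor4 \<Rightarrow> 'n tensor4 \<Rightarrow> 'n tensor4" where
  "tsub4 S T = (\<lambda>i1 i2 i3 i4. S i1 i2 i3 i4 - T i1 i2 i3 i4)"

definition lambda_Cmax :: "('n::finite) tensor3 \<Rightarrow> real" where
  "lambda_Cmax A = Sup {(\<Sum>i\<in>UNIV. \<Sum>j\<in>UNIV. \<Sum>k\<in>UNIV. A i j k * x i * y j * y k)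
                        | x y. unit_vec x \<and> unit_vec y}"

definition S_of :: "('n::finite) tensor3 \<Rightarrow> 'n tensor4" where
  "S_of A = (let b = (\<lambda>i1 i2 i3 i4. \<Sum>i\<in>UNIV. A i i1 i2 * A i i3 i4) in
     (\<lambda>i1 i2 i3 i4. (b i1 i2 i3 i4 + b i1 i3 i2 i4 + b i1 i4 i2 i3) / 3))"

definition Z_eigenvalue :: "('n::finite) tensor4 \<Rightarrow> real \<Rightarrow> bool" where
  "Z_eigenvalue T lam \<longleftrightarrow> (\<exists>x. unit_vec x \<and>
      (\<forall>i. (\<Sum>i2\<in>UNIV. \<Sum>i3\<in>UNIV. \<Sum>i4\<in>UNIV. T i i2 i3 i4 * x i2 * x i3 * x i4) = lam * x i))"

definition lambda_Zmax :: "('n::finite) tensor4 \<Rightarrow> real" where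
  "lambda_Zmax T = Sup {lam. Z_eigenvalue T lam}"

definition lambda_Zmin :: "('n::finite) tensor4 \<Rightarrow> real" where
  "lambda_Zmin T = Inf {lam. Z_eigenvalue T lam}"

end

theory Submission
  imports Defs "HOL-Analysis.Analysis"
begin

text \<open>For every tensor A the quartic form of S_A is x \<mapsto> norm (A x^2)^2, where
  (A x^2)_i = \<Sum>j k. a_ijk x_j x_k. Hence a Z-eigenvalue of S_{A+E} - S_A with unit eigenvector x
  equals norm ((A+E) x^2)^2 - norm (A x^2)^2. By Cauchy-Schwarz norm (A x^2) \<le> \<lambda>_Cmax(A), and
  the two norms differ by at most norm (E x^2) \<le> \<lambda>_Cmax(E); so with c = \<lambda>_Cmax(A) and
  e = \<lambda>_Cmax(E) every Z-eigenvalue \<lambda> satisfies max(c - e, 0)^2 \<le> c^2 + \<lambda> \<le> (c + e)^2.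
  For piezoelectric-type tensors S_{A+E} - S_A is fully symmetric, so a maximiser of its quartic
  form on the unit sphere is a Z-eigenvector (Lagrange multipliers); thus the set of Z-eigenvalues
  is nonempty and its supremum and infimum obey the same bounds.\<close>

definition sum4 :: "('n::finite \<Rightarrow> 'n \<Rightarrow> 'n \<Rightarrow> 'n \<Rightarrow> real) \<Rightarrow> real" where
  "sum4 f = (\<Sum>a\<in>UNIV. \<Sum>b\<in>UNIV. \<Sum>c\<in>UNIV. \<Sum>d\<in>UNIV. f a b c d)"

lemma sum4_swap12: "sum4 (\<lambda>a b c d. f b a c d) = sum4 f"
  unfolding sum4_def by (rule sum.swap)

lemma sum4_swap23: "sum4 (\<lambda>a b c d. f a c b d) = sum4 f"
  unfolding sum4_def by (rule sum.cong[OF refl], rule sum.swap)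

lemma sum4_swap34: "sum4 (\<lambda>a b c d. f a b d c) = sum4 f"
  unfolding sum4_def by (rule sum.cong[OF refl], rule sum.cong[OF refl], rule sum.swap)

lemma sum4_swap13: "sum4 (\<lambda>a b c d. f c b a d) = sum4 f"
  using sum4_swap12[of "\<lambda>a b c d. f c a b d"] sum4_swap23[of "\<lambda>a b c d. f b a c d"]
    sum4_swap12[of f]
  by simp

lemma sum4_swap14: "sum4 (\<lambda>a b c d. f d b c a) = sum4 f"
  using sum4_swap34[of "\<lambda>a b c d. f c b d a"] sum4_swap13[of "\<lambda>a b c d. f a b d c"]
    sum4_swap34[of f]
  by simp

lemma sum4_rotate234: "sum4 (\<lambda>a b c d. f a d b c) = sum4 f"
  using sum4_swap34[of "\<lambda>a b c d. f a c b d"] sum4_swap23[of f] by simp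

lemma sum4_add: "sum4 (\<lambda>a b c d. f a b c d + g a b c d) = sum4 f + sum4 g"
  unfolding sum4_def by (simp add: sum.distrib)

lemma sum4_diff: "sum4 (\<lambda>a b c d. f a b c d - g a b c d) = sum4 f - sum4 g"
  unfolding sum4_def by (simp add: sum_subtractf)

lemma sum4_cmult: "sum4 (\<lambda>a b c d. k * f a b c d) = k * sum4 f"
  unfolding sum4_def by (simp add: sum_distrib_left)

lemma sum4_sum: "sum4 (\<lambda>a b c d. \<Sum>i\<in>UNIV. g i a b c d) = (\<Sum>i\<in>UNIV. sum4 (g i))"
  unfolding sum4_def
  by (subst sum.swap, subst (2) sum.swap, subst (3) sum.swap, subst (4) sum.swap) (rule refl)

definition form4 :: "('n::finite) tensor4 \<Rightarrow> ('n \<Rightarrow> real) \<Rightarrow> real" where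
  "form4 T x = sum4 (\<lambda>a b c d. T a b c d * x a * x b * x c * x d)"

definition contract3 :: "('n::finite) tensor3 \<Rightarrow> ('n \<Rightarrow> real) \<Rightarrow> 'n \<Rightarrow> real" where
  "contract3 A y i = (\<Sum>j\<in>UNIV. \<Sum>k\<in>UNIV. A i j k * y j * y k)"

definition B_of :: "('n::finite) tensor3 \<Rightarrow> 'n tensor4" where
  "B_of A p q r s = (\<Sum>i\<in>UNIV. A i p q * A i r s)"

lemma S_of_eq_B_of: "S_of A p q r s = (B_of A p q r s + B_of A p r q s + B_of A p s q r) / 3"
  unfolding S_of_def B_of_def Let_def by simp

lemma B_of_swap_pairs: "B_of A r s p q = B_of A p q r s"
  unfolding B_of_def by (simp add: mult.commute)

lemma B_of_swap12: "piezo_type A \<Longrightarrow> B_of A q p r s = B_of A p q r s"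
  unfolding B_of_def piezo_type_def by simp

lemma B_of_swap34: "piezo_type A \<Longrightarrow> B_of A p q s r = B_of A p q r s"
  unfolding B_of_def piezo_type_def by simp

lemma form4_B_of: "form4 (B_of A) x = (\<Sum>i\<in>UNIV. (contract3 A x i)\<^sup>2)"
proof -
  have "form4 (B_of A) x = sum4 (\<lambda>p q r s. \<Sum>i\<in>UNIV. A i p q * A i r s * x p * x q * x r * x s)"
    unfolding form4_def B_of_def by (simp add: sum_distrib_right)
  also have "\<dots> = (\<Sum>i\<in>UNIV. sum4 (\<lambda>p q r s. A i p q * A i r s * x p * x q * x r * x s))"
    by (rule sum4_sum)
  also have "\<dots> = (\<Sum>i\<in>UNIV. (contract3 A x i)\<^sup>2)"
    unfolding sum4_def contract3_def power2_eq_square sum_distrib_right sum_distrib_left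
    by (simp add: mult_ac)
  finally show ?thesis .
qed

text \<open>The three summands of S_A give the same quartic form, whether or not A is
  piezoelectric-type.\<close>

lemma form4_S_of: "form4 (S_of A) x = (L2_set (contract3 A x) UNIV)\<^sup>2"
proof -
  let ?f = "\<lambda>p q r s. B_of A p q r s * x p * x q * x r * x s"
  have "form4 (S_of A) x
      = sum4 (\<lambda>p q r s. ?f p q r s / 3 + (?f p r q s / 3 + ?f p s q r / 3))"
    unfolding form4_def S_of_eq_B_of
    by (rule arg_cong[where f = sum4]) (simp add: fun_eq_iff algebra_simps add_divide_distrib)
  also have "\<dots> = sum4 ?f / 3 + (sum4 (\<lambda>p q r s. ?f p r q s) / 3 + sum4 (\<lambda>p q r s. ?f p s q r) / 3)"
    by (simp only: sum4_add sum4_cmult divide_inverse mult.commute[of _ "inverse 3"])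
  also have "sum4 (\<lambda>p q r s. ?f p r q s) = sum4 ?f"
    by (rule sum4_swap23)
  also have "sum4 (\<lambda>p q r s. ?f p s q r) = sum4 ?f"
    by (rule sum4_rotate234)
  also have "sum4 ?f / 3 + (sum4 ?f / 3 + sum4 ?f / 3) = form4 (B_of A) x"
    unfolding form4_def by simp
  finally show ?thesis
    unfolding form4_B_of L2_set_def by (simp add: sum_nonneg)
qed

text \<open>The transpositions (1 2), (1 3), (1 4) generate all permutations of the four indices.\<close>

definition symmetric4 :: "'n tensor4 \<Rightarrow> bool" where
  "symmetric4 T \<longleftrightarrow>
    (\<forall>a b c d. T b a c d = T a b c d \<and> T c b a d = T a b c d \<and> T d b c a = T a b c d)"

lemma symmetric4_tsub4: "symmetric4 S \<Longrightarrow> symmetric4 T \<Longrightarrow> symmetric4 (tsub4 S T)"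
  unfolding symmetric4_def tsub4_def by metis

lemma symmetric4_S_of:
  assumes "piezo_type A"
  shows "symmetric4 (S_of A)"
  unfolding symmetric4_def S_of_eq_B_of
  using B_of_swap_pairs[of A] B_of_swap12[OF assms] B_of_swap34[OF assms] by simp

definition contract4 :: "('n::finite) tensor4 \<Rightarrow> ('n \<Rightarrow> real) \<Rightarrow> 'n \<Rightarrow> real" where
  "contract4 T x i = (\<Sum>b\<in>UNIV. \<Sum>c\<in>UNIV. \<Sum>d\<in>UNIV. T i b c d * x b * x c * x d)"

lemma Z_eigenvalue_iff_contract4:
  "Z_eigenvalue T lam \<longleftrightarrow> (\<exists>x. unit_vec x \<and> (\<forall>i. contract4 T x i = lam * x i))"
  unfolding Z_eigenvalue_def contract4_def ..

lemma form4_eq_contract4: "form4 T x = (\<Sum>a\<in>UNIV. x a * contract4 T x a)"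
  unfolding form4_def sum4_def contract4_def by (simp add: sum_distrib_left mult_ac)

lemma unit_vec_iff_sum_squares: "unit_vec x \<longleftrightarrow> (\<Sum>i\<in>UNIV. (x i)\<^sup>2) = 1"
  unfolding unit_vec_def power2_eq_square ..

lemma Z_eigenvalue_form4E:
  assumes "Z_eigenvalue T lam"
  obtains x where "unit_vec x" and "form4 T x = lam"
proof -
  obtain x where x: "unit_vec x" and ev: "\<And>i. contract4 T x i = lam * x i"
    using assms unfolding Z_eigenvalue_iff_contract4 by blast
  have "form4 T x = lam * (\<Sum>i\<in>UNIV. x i * x i)"
    unfolding form4_eq_contract4 ev by (simp add: sum_distrib_left mult_ac)
  with x that show ?thesis unfolding unit_vec_def by simp
qed

lemma unit_vec_iff_norm: "unit_vec x \<longleftrightarrow> norm (vec_lambda x :: real^'n::finite) = 1"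
  unfolding unit_vec_iff_sum_squares norm_vec_def L2_set_def by simp

lemma form4_attains_max:
  fixes T :: "('n::finite) tensor4"
  obtains x where "unit_vec x" and "\<And>u. unit_vec u \<Longrightarrow> form4 T u \<le> form4 T x"
proof -
  let ?F = "\<lambda>z::real^'n. form4 T (vec_nth z)"
  have "continuous_on (sphere 0 1) ?F"
    unfolding form4_def sum4_def by (intro continuous_intros)
  then obtain z where z: "z \<in> sphere 0 1" and max: "\<And>w. w \<in> sphere 0 1 \<Longrightarrow> ?F w \<le> ?F z"
    using continuous_attains_sup[of "sphere 0 1" ?F] by auto
  show ?thesis
  proof
    show "unit_vec (vec_nth z)"
      unfolding unit_vec_iff_norm using z by simp
    show "form4 T u \<le> form4 T (vec_nth z)" if "unit_vec u" for u
      using max[of "vec_lambda u"] that unfolding unit_vec_iff_norm by (simp add: vec_lambda_inverse)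
  qed
qed

lemma form4_scale: "form4 T (\<lambda>i. k * u i) = k ^ 4 * form4 T u"
  unfolding form4_def sum4_def by (simp add: sum_distrib_left power4_eq_xxxx mult_ac)

lemma form4_le_homogeneous:
  assumes max: "\<And>u. unit_vec u \<Longrightarrow> form4 T u \<le> mu"
  shows "form4 T y \<le> mu * (\<Sum>j\<in>UNIV. (y j)\<^sup>2)\<^sup>2"
proof (cases "y = (\<lambda>_. 0)")
  case True
  then show ?thesis by (simp add: form4_def sum4_def)
next
  case False
  define N where "N = (\<Sum>j\<in>UNIV. (y j)\<^sup>2)"
  obtain j where "y j \<noteq> 0"
    using False by auto
  have "(y j)\<^sup>2 \<le> N"
    unfolding N_def by (rule member_le_sum) auto
  moreover have "(y j)\<^sup>2 > 0"
    using \<open>y j \<noteq> 0\<close> by simp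
  ultimately have "N > 0"
    by linarith
  define k where "k = sqrt N"
  have "k > 0" and k2: "k\<^sup>2 = N"
    using \<open>N > 0\<close> unfolding k_def by simp_all
  define u where "u i = y i / k" for i
  have "unit_vec u"
    unfolding unit_vec_iff_sum_squares u_def
    using \<open>N > 0\<close> by (simp add: power_divide k2 N_def[symmetric] flip: sum_divide_distrib)
  have "y = (\<lambda>i. k * u i)"
    unfolding u_def using \<open>k > 0\<close> by simp
  then have "form4 T y = (k\<^sup>2)\<^sup>2 * form4 T u"
    by (simp add: form4_scale flip: power_mult)
  also have "\<dots> \<le> N\<^sup>2 * mu"
    unfolding k2 using max[OF \<open>unit_vec u\<close>] by (simp add: mult_left_mono)
  finally show ?thesis unfolding N_def by (simp add: mult.commute)
qed

lemma has_real_derivative_form4: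
  "((\<lambda>e. form4 T (\<lambda>j. x j + e * v j)) has_real_derivative
     sum4 (\<lambda>a b c d. T a b c d * (v a * x b * x c * x d + x a * v b * x c * x d
                                  + x a * x b * v c * x d + x a * x b * x c * v d))) (at 0)"
  unfolding form4_def sum4_def
  by (auto intro!: derivative_eq_intros simp: algebra_simps)

lemma sum4_polarization_symmetric4:
  assumes "symmetric4 T"
  shows "sum4 (\<lambda>a b c d. T a b c d * (v a * x b * x c * x d + x a * v b * x c * x d
                                     + x a * x b * v c * x d + x a * x b * x c * v d))
       = 4 * (\<Sum>a\<in>UNIV. v a * contract4 T x a)"
proof -
  let ?P = "\<lambda>a b c d. T a b c d * v a * x b * x c * x d"
  have sym: "T b a c d = T a b c d" "T c b a d = T a b c d" "T d b c a = T a b c d" for a b c d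
    using assms unfolding symmetric4_def by blast+
  have P_perm: "?P b a c d = T a b c d * x a * v b * x c * x d"
    "?P c b a d = T a b c d * x a * x b * v c * x d"
    "?P d b c a = T a b c d * x a * x b * x c * v d" for a b c d
    using sym[of a b c d] by simp_all
  have 2: "sum4 (\<lambda>a b c d. T a b c d * x a * v b * x c * x d) = sum4 ?P"
    using sum4_swap12[of ?P] unfolding P_perm(1) .
  have 3: "sum4 (\<lambda>a b c d. T a b c d * x a * x b * v c * x d) = sum4 ?P"
    using sum4_swap13[of ?P] unfolding P_perm(2) .
  have 4: "sum4 (\<lambda>a b c d. T a b c d * x a * x b * x c * v d) = sum4 ?P"
    using sum4_swap14[of ?P] unfolding P_perm(3) .
  have "sum4 ?P = (\<Sum>a\<in>UNIV. v a * contract4 T x a)"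
    unfolding sum4_def contract4_def by (simp add: sum_distrib_left mult_ac)
  moreover have "sum4 (\<lambda>a b c d. T a b c d * (v a * x b * x c * x d + x a * v b * x c * x d
                                     + x a * x b * v c * x d + x a * x b * x c * v d))
      = sum4 ?P + sum4 (\<lambda>a b c d. T a b c d * x a * v b * x c * x d)
        + sum4 (\<lambda>a b c d. T a b c d * x a * x b * v c * x d)
        + sum4 (\<lambda>a b c d. T a b c d * x a * x b * x c * v d)"
    by (simp only: sum4_add[symmetric] distrib_left mult.assoc)
  ultimately show ?thesis
    unfolding 2 3 4 by simp
qed

lemma has_real_derivative_sum_squares_sq:
  "((\<lambda>e. (\<Sum>j\<in>UNIV. (x j + e * v j)\<^sup>2)\<^sup>2) has_real_derivative
     2 * (\<Sum>j\<in>UNIV. (x j)\<^sup>2) * (\<Sum>j\<in>UNIV. 2 * x j * v j)) (at 0)"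
  by (auto intro!: derivative_eq_intros simp: algebra_simps)

text \<open>Testing the stationarity condition of the Lagrangian against the residual
  T x^3 - \<mu> x itself shows that the residual vanishes.\<close>

lemma Z_eigenvalue_if_form4_max:
  assumes "symmetric4 T" and x: "unit_vec x"
    and max: "\<And>u. unit_vec u \<Longrightarrow> form4 T u \<le> form4 T x"
  shows "Z_eigenvalue T (form4 T x)"
proof -
  define mu where "mu = form4 T x"
  define r where "r a = contract4 T x a - mu * x a" for a
  define F where "F e = form4 T (\<lambda>j. x j + e * r j) - mu * (\<Sum>j\<in>UNIV. (x j + e * r j)\<^sup>2)\<^sup>2"
    for e
  have x1: "(\<Sum>j\<in>UNIV. (x j)\<^sup>2) = 1"
    using x unfolding unit_vec_iff_sum_squares .
  have "(F has_real_derivative 4 * (\<Sum>a\<in>UNIV. r a * r a)) (at 0)"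
  proof -
    have "(F has_real_derivative
        4 * (\<Sum>a\<in>UNIV. r a * contract4 T x a) - mu * (2 * 1 * (\<Sum>j\<in>UNIV. 2 * x j * r j))) (at 0)"
      unfolding F_def sum4_polarization_symmetric4[OF assms(1), symmetric] x1[symmetric]
      by (intro DERIV_diff DERIV_cmult has_real_derivative_form4
          has_real_derivative_sum_squares_sq)
    then show ?thesis
      by (simp add: r_def algebra_simps sum_subtractf sum_distrib_left sum.distrib)
  qed
  moreover have "F e \<le> F 0" for e
  proof -
    have "F e \<le> 0"
      using form4_le_homogeneous[of T mu "\<lambda>j. x j + e * r j"] max unfolding F_def mu_def by simp
    moreover have "F 0 = 0"
      unfolding F_def mu_def using x1 by simp
    ultimately show ?thesis by simp
  qed
  ultimately have "4 * (\<Sum>a\<in>UNIV. r a * r a) = 0"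
    by (intro DERIV_local_max[of F _ 0 1]) auto
  then have "r a = 0" for a
    by (simp add: sum_nonneg_eq_0_iff)
  then show ?thesis
    unfolding Z_eigenvalue_iff_contract4 mu_def r_def using x by auto
qed

lemma Z_eigenvalue_exists:
  assumes "symmetric4 T"
  shows "\<exists>lam. Z_eigenvalue T lam"
  using form4_attains_max[of T] Z_eigenvalue_if_form4_max[OF assms] by metis

definition cform :: "('n::finite) tensor3 \<Rightarrow> ('n \<Rightarrow> real) \<Rightarrow> ('n \<Rightarrow> real) \<Rightarrow> real" where
  "cform A x y = (\<Sum>i\<in>UNIV. \<Sum>j\<in>UNIV. \<Sum>k\<in>UNIV. A i j k * x i * y j * y k)"

lemma lambda_Cmax_eq_Sup_cform:
  "lambda_Cmax A = Sup {cform A x y | x y. unit_vec x \<and> unit_vec y}"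
  unfolding lambda_Cmax_def cform_def ..

lemma cform_eq_contract3: "cform A x y = (\<Sum>i\<in>UNIV. x i * contract3 A y i)"
  unfolding cform_def contract3_def by (simp add: sum_distrib_left mult_ac)

lemma abs_le_1_if_unit_vec:
  assumes "unit_vec x"
  shows "\<bar>x i\<bar> \<le> 1"
proof -
  have "(x i)\<^sup>2 \<le> (\<Sum>j\<in>UNIV. (x j)\<^sup>2)"
    by (rule member_le_sum) auto
  with assms show ?thesis
    unfolding unit_vec_iff_sum_squares by (simp add: abs_square_le_1)
qed

lemma cform_le_sum_abs:
  assumes "unit_vec x" and "unit_vec y"
  shows "cform A x y \<le> (\<Sum>i\<in>UNIV. \<Sum>j\<in>UNIV. \<Sum>k\<in>UNIV. \<bar>A i j k\<bar>)"
  unfolding cform_def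
proof (intro sum_mono)
  fix i j k
  have "\<bar>x i\<bar> * \<bar>y j\<bar> * \<bar>y k\<bar> \<le> 1"
    using abs_le_1_if_unit_vec[OF assms(1), of i] abs_le_1_if_unit_vec[OF assms(2)]
    by (intro mult_le_one) (auto simp: mult_le_one)
  then have "\<bar>A i j k\<bar> * (\<bar>x i\<bar> * \<bar>y j\<bar> * \<bar>y k\<bar>) \<le> \<bar>A i j k\<bar>"
    by (simp add: mult_left_le)
  have "A i j k * x i * y j * y k \<le> \<bar>A i j k * x i * y j * y k\<bar>"
    by (rule abs_ge_self)
  also have "\<dots> = \<bar>A i j k\<bar> * (\<bar>x i\<bar> * \<bar>y j\<bar> * \<bar>y k\<bar>)"
    by (simp add: abs_mult)
  finally show "A i j k * x i * y j * y k \<le> \<bar>A i j k\<bar>"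
    using \<open>\<bar>A i j k\<bar> * (\<bar>x i\<bar> * \<bar>y j\<bar> * \<bar>y k\<bar>) \<le> \<bar>A i j k\<bar>\<close> by linarith
qed

lemma cform_le_lambda_Cmax:
  assumes "unit_vec x" and "unit_vec y"
  shows "cform A x y \<le> lambda_Cmax A"
  unfolding lambda_Cmax_eq_Sup_cform
proof (rule cSup_upper)
  show "cform A x y \<in> {cform A x y | x y. unit_vec x \<and> unit_vec y}"
    using assms by blast
  show "bdd_above {cform A x y | x y. unit_vec x \<and> unit_vec y}"
    unfolding bdd_above_def using cform_le_sum_abs by blast
qed

lemma unit_vec_exists: "\<exists>x :: 'n::finite \<Rightarrow> real. unit_vec x"
proof
  fix i0 :: 'n
  show "unit_vec (\<lambda>i. if i = i0 then 1 else 0)"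
    unfolding unit_vec_def by (simp add: if_distrib cong: if_cong)
qed

text \<open>Cauchy-Schwarz is attained at x = A y^2 / norm (A y^2), so the norm of A y^2 is a
  value of the C-form.\<close>

lemma L2_set_contract3_le_lambda_Cmax:
  fixes A :: "('n::finite) tensor3"
  assumes y: "unit_vec y"
  shows "L2_set (contract3 A y) UNIV \<le> lambda_Cmax A"
proof -
  let ?L = "L2_set (contract3 A y) UNIV"
  have L_sq: "?L\<^sup>2 = (\<Sum>i\<in>UNIV. (contract3 A y i)\<^sup>2)"
    unfolding L2_set_def by (simp add: sum_nonneg)
  show ?thesis
  proof (cases "?L = 0")
    case True
    obtain x :: "'n \<Rightarrow> real" where "unit_vec x"
      using unit_vec_exists by blast
    have "cform A x y = 0"
      using True unfolding cform_eq_contract3 by (simp add: L2_set_eq_0_iff)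
    with True cform_le_lambda_Cmax[OF \<open>unit_vec x\<close> y, of A] show ?thesis by simp
  next
    case False
    then have "?L > 0"
      using L2_set_nonneg[of "contract3 A y" UNIV] by linarith
    define x where "x i = contract3 A y i / ?L" for i
    have "unit_vec x"
      unfolding unit_vec_iff_sum_squares x_def
      using \<open>?L > 0\<close> by (simp add: power_divide flip: sum_divide_distrib L_sq)
    moreover have "cform A x y = ?L"
      unfolding cform_eq_contract3 x_def using \<open>?L > 0\<close>
      by (simp add: power2_eq_square flip: sum_divide_distrib L_sq[unfolded power2_eq_square])
    ultimately show ?thesis
      using cform_le_lambda_Cmax[OF _ y] by metis
  qed
qed

lemma lambda_Cmax_nonneg: "0 \<le> lambda_Cmax (A :: ('n::finite) tensor3)"
proof -
  obtain y :: "'n \<Rightarrow> real" where "unit_vec y"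
    using unit_vec_exists by blast
  then show ?thesis
    using L2_set_contract3_le_lambda_Cmax[of y A] L2_set_nonneg[of "contract3 A y" UNIV] by linarith
qed

lemma abs_L2_set_add_diff_le: "\<bar>L2_set (\<lambda>i. f i + g i) A - L2_set f A\<bar> \<le> L2_set g A"
proof -
  have "L2_set f A = L2_set (\<lambda>i. (f i + g i) + - g i) A"
    by simp
  also have "\<dots> \<le> L2_set (\<lambda>i. f i + g i) A + L2_set (\<lambda>i. - g i) A"
    by (rule L2_set_triangle_ineq)
  finally have "L2_set f A \<le> L2_set (\<lambda>i. f i + g i) A + L2_set g A"
    by (simp add: L2_set_def)
  then show ?thesis
    using L2_set_triangle_ineq[of f g A] by linarith
qed

lemma sq_diff_bounds:
  fixes s t c e :: real
  assumes "0 \<le> s" and "0 \<le> t" and "t \<le> c" and "\<bar>s - t\<bar> \<le> e"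
  shows "(max (c - e) 0)\<^sup>2 \<le> c\<^sup>2 + (s\<^sup>2 - t\<^sup>2)"
    and "c\<^sup>2 + (s\<^sup>2 - t\<^sup>2) \<le> (c + e)\<^sup>2"
proof -
  have "e \<ge> 0" and "t * e \<le> c * e"
    using assms by (auto intro: mult_right_mono)
  have "s\<^sup>2 \<le> (t + e)\<^sup>2"
    using assms by (intro power_mono) auto
  then show "c\<^sup>2 + (s\<^sup>2 - t\<^sup>2) \<le> (c + e)\<^sup>2"
    using \<open>t * e \<le> c * e\<close> by (simp add: power2_eq_square algebra_simps)
  have gap: "t\<^sup>2 - s\<^sup>2 \<le> 2 * (c * e) - e\<^sup>2" if "e < c"
  proof (cases "t \<le> e")
    case True
    then have "t\<^sup>2 \<le> e\<^sup>2" and "e\<^sup>2 \<le> c * e"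
      using assms \<open>e \<ge> 0\<close> \<open>e < c\<close>
      by (auto simp: power2_eq_square intro: mult_mono mult_right_mono)
    moreover have "0 \<le> s\<^sup>2"
      by simp
    ultimately show ?thesis
      by linarith
  next
    case False
    then have "(t - e)\<^sup>2 \<le> s\<^sup>2"
      using assms by (intro power_mono) auto
    then show ?thesis
      using \<open>t * e \<le> c * e\<close> by (simp add: power2_eq_square algebra_simps)
  qed
  have "t\<^sup>2 \<le> c\<^sup>2" and "0 \<le> s\<^sup>2"
    using assms by (auto intro: power_mono)
  have "(c - e)\<^sup>2 = c\<^sup>2 - 2 * (c * e) + e\<^sup>2"
    by (simp add: power2_eq_square algebra_simps)
  show "(max (c - e) 0)\<^sup>2 \<le> c\<^sup>2 + (s\<^sup>2 - t\<^sup>2)"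
  proof (cases "e < c")
    case True
    then have "max (c - e) 0 = c - e"
      by simp
    with gap[OF True] show ?thesis
      using \<open>(c - e)\<^sup>2 = c\<^sup>2 - 2 * (c * e) + e\<^sup>2\<close> by simp
  next
    case False
    then have "(max (c - e) 0)\<^sup>2 = 0"
      by simp
    then show ?thesis
      using \<open>t\<^sup>2 \<le> c\<^sup>2\<close> \<open>0 \<le> s\<^sup>2\<close> by linarith
  qed
qed

lemma contract3_tadd3:
  "contract3 (tadd3 A E) y = (\<lambda>i. contract3 A y i + contract3 E y i)"
  unfolding contract3_def tadd3_def by (simp add: algebra_simps sum.distrib)

lemma form4_tsub4: "form4 (tsub4 S T) x = form4 S x - form4 T x"
  unfolding form4_def tsub4_def by (simp add: sum4_diff[symmetric] algebra_simps)

lemma form4_S_of_perturbation_bounds: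
  fixes A E :: "('n::finite) tensor3"
  assumes "unit_vec x"
  shows "(max (lambda_Cmax A - lambda_Cmax E) 0)\<^sup>2
           \<le> (lambda_Cmax A)\<^sup>2 + form4 (tsub4 (S_of (tadd3 A E)) (S_of A)) x"
    and "(lambda_Cmax A)\<^sup>2 + form4 (tsub4 (S_of (tadd3 A E)) (S_of A)) x
           \<le> (lambda_Cmax A + lambda_Cmax E)\<^sup>2"
proof -
  let ?s = "L2_set (contract3 (tadd3 A E) x) UNIV"
  let ?t = "L2_set (contract3 A x) UNIV"
  have form: "form4 (tsub4 (S_of (tadd3 A E)) (S_of A)) x = ?s\<^sup>2 - ?t\<^sup>2"
    by (simp add: form4_tsub4 form4_S_of)
  have "\<bar>?s - ?t\<bar> \<le> lambda_Cmax E"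
    using abs_L2_set_add_diff_le[of "contract3 A x" "contract3 E x" UNIV]
      L2_set_contract3_le_lambda_Cmax[OF assms, of E]
    unfolding contract3_tadd3 by linarith
  from sq_diff_bounds[OF L2_set_nonneg L2_set_nonneg
      L2_set_contract3_le_lambda_Cmax[OF assms] this]
  show "(max (lambda_Cmax A - lambda_Cmax E) 0)\<^sup>2
           \<le> (lambda_Cmax A)\<^sup>2 + form4 (tsub4 (S_of (tadd3 A E)) (S_of A)) x"
    and "(lambda_Cmax A)\<^sup>2 + form4 (tsub4 (S_of (tadd3 A E)) (S_of A)) x
           \<le> (lambda_Cmax A + lambda_Cmax E)\<^sup>2"
    unfolding form by simp_all
qed

theorem theorem2p3:
  fixes A E :: "('n::finite) tensor3"
  assumes "piezo_type A" and "piezo_type (tadd3 A E)"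
  shows "{sqrt ((lambda_Cmax A)\<^sup>2 + lambda_Zmin (tsub4 (S_of (tadd3 A E)) (S_of A))) ..
          sqrt ((lambda_Cmax A)\<^sup>2 + lambda_Zmax (tsub4 (S_of (tadd3 A E)) (S_of A)))}
         \<subseteq> {lambda_Cmax A - lambda_Cmax E .. lambda_Cmax A + lambda_Cmax E}"
proof -
  define T where "T = tsub4 (S_of (tadd3 A E)) (S_of A)"
  define c where "c = lambda_Cmax A"
  define e where "e = lambda_Cmax E"
  have "symmetric4 T"
    unfolding T_def using assms by (intro symmetric4_tsub4 symmetric4_S_of)
  then have nonempty: "{lam. Z_eigenvalue T lam} \<noteq> {}"
    using Z_eigenvalue_exists by blast
  have bounds: "(max (c - e) 0)\<^sup>2 - c\<^sup>2 \<le> lam \<and> lam \<le> (c + e)\<^sup>2 - c\<^sup>2"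
    if "Z_eigenvalue T lam" for lam
    using Z_eigenvalue_form4E[OF that] form4_S_of_perturbation_bounds[of _ A E]
    unfolding T_def c_def e_def by (metis add.commute le_diff_eq diff_le_eq)
  have "lambda_Zmax T \<le> (c + e)\<^sup>2 - c\<^sup>2"
    unfolding lambda_Zmax_def using nonempty bounds by (intro cSup_least) auto
  have "lambda_Zmin T \<ge> (max (c - e) 0)\<^sup>2 - c\<^sup>2"
    unfolding lambda_Zmin_def using nonempty bounds by (intro cInf_greatest) auto
  have "sqrt (c\<^sup>2 + lambda_Zmax T) \<le> sqrt ((c + e)\<^sup>2)"
    using \<open>lambda_Zmax T \<le> (c + e)\<^sup>2 - c\<^sup>2\<close> by (intro real_sqrt_le_mono) simp
  also have "\<dots> = c + e"
    unfolding c_def e_def using lambda_Cmax_nonneg[of A] lambda_Cmax_nonneg[of E] by simp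
  finally have upper: "sqrt (c\<^sup>2 + lambda_Zmax T) \<le> c + e" .
  have "c - e \<le> sqrt ((max (c - e) 0)\<^sup>2)"
    by simp
  also have "\<dots> \<le> sqrt (c\<^sup>2 + lambda_Zmin T)"
    using \<open>lambda_Zmin T \<ge> (max (c - e) 0)\<^sup>2 - c\<^sup>2\<close> by (intro real_sqrt_le_mono) simp
  finally have lower: "c - e \<le> sqrt (c\<^sup>2 + lambda_Zmin T)" .
  from lower upper show ?thesis
    unfolding T_def c_def e_def by auto
qed

end
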